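(* Let $\mathcal{G}=\langle S,A,T,s_0,F\rangle$ be a two-player turn-based deterministic reachability game, let $Y\subseteq\mathrm{Win}_2(\mathcal{G},F)\setminus F$ and let $s\in\mathrm{Win}_2(\mathcal{G},F)\setminus F$. Then $\mathrm{DSWin}_1(\emptyset,Y)\cup\mathrm{DSWin}_1(\emptyset,\{s\})\subseteq\mathrm{DSWin}_1(\emptyset,Y\cup\{s\})$.
   Context: A two-player turn-based deterministic reachability game is a tuple $\mathcal{G}=\langle S,A,T,s_0,F\rangle$: $S$ finite, partitioned into P1 states $S_1$ and P2 states $S_2$; $A=A_1\cup A_2$ (P1 and P2 actions); $T:(S_1\times A_1)\cup(S_2\times A_2)\to S$ deterministic, possibly partial ($a$ enabled at $s$ iff $T(s,a)$ defined; every state has an enabled action); $s_0$ initial; $F\subseteq S$ a set of sink states (P2's goal). For a target $R\subseteq S$: $Z_0=R$, $Z_{k+1}=Z_k\cup\{s\in S_1:T(s,a)\in Z_k\ \forall\text{ enabled }a\}\cup\{s\in S_2:T(s,a)\in Z_k\text{ for some enabled }a\}$; $\mathrm{Win}_2(\mathcal{G},R)=\bigcup_kZ_k$; $\mathrm{rank}_{\mathcal{G},R}(s)=\min\{k:s\in Z_k\}$ ($\infty$ if none). For disjoint $X,Y\subseteq\mathrm{Win}_2(\mathcal{G},F)\setminus F$ (traps $X$, fake targets $Y$): the true game $\mathcal{G}^1_{X,Y}$ has states $S$, transitions $T_{X,Y}(q,a)=T(q,a)$ if $q\notin X\cup Y$ and $T_{X,Y}(q,a)=q$ if $q\in X\cup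 Y$; P2's perceptual game $\mathcal{G}^2_{X,Y}$ has transitions $T$ and goal $F\cup Y$, with $\mathrm{rank}_{\mathcal{G}^2_{X,Y}}:=\mathrm{rank}_{\mathcal{G},F\cup Y}$. Subjectively rationalizable actions: for $q\in S_2\cap\mathrm{Win}_2(\mathcal{G},F)\setminus(F\cup Y)$, $\mathsf{SRActs}_{X,Y}(q)=\{a\text{ enabled}:\mathrm{rank}_{\mathcal{G}^2_{X,Y}}(T(q,a))<\mathrm{rank}_{\mathcal{G}^2_{X,Y}}(q)\}$; at every other state, all enabled actions. A memoryless deterministic strategy of either player is subjectively rationalizable if it picks an action in $\mathsf{SRActs}_{X,Y}(q)$ at each of that player's states $q$. A memoryless deterministic P1 strategy $\pi_1$ is stealthy deceptive sure winning at $s$ if it is subjectively rationalizable and, for every subjectively rationalizable memoryless deterministic P2 strategy $\pi_2$, every path from $s$ generated by $(\pi_1,\pi_2)$ in the true game $\mathcal{G}^1_{X,Y}$ visits $X\cup Y$ within finitely many steps. $\mathrm{DSWin}_1(X,Y)$ is the set of states at which P1 has such a strategy. *)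

theory Defs
  imports Main "HOL-Library.Extended_Nat"
begin

record ('s, 'a) game =
  st  :: "'s set"
  st1 :: "'s set"
  st2 :: "'s set"
  act1 :: "'a set"
  act2 :: "'a set"
  trans :: "'s \<Rightarrow> 'a \<Rightarrow> 's option"
  init :: "'s"
  fin :: "'s set"

definition enabled :: "('s, 'a) game \<Rightarrow> 's \<Rightarrow> 'a \<Rightarrow> bool" where
  "enabled G s a \<longleftrightarrow> trans G s a \<noteq> None"

definition succ :: "('s, 'a) game \<Rightarrow> 's \<Rightarrow> 'a \<Rightarrow> 's" where
  "succ G s a = the (trans G s a)"

definition wf_game :: "('s, 'a) game \<Rightarrow> bool" where
  "wf_game G \<longleftrightarrow>
     finite (st G) \<and> st1 G \<inter> st2 G = {} \<and> st1 G \<union> st2 G = st G \<and>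
     init G \<in> st G \<and> fin G \<subseteq> st G \<and>
     (\<forall>s a. enabled G s a \<longrightarrow>
        s \<in> st G \<and> (s \<in> st1 G \<longrightarrow> a \<in> act1 G) \<and> (s \<in> st2 G \<longrightarrow> a \<in> act2 G)
        \<and> succ G s a \<in> st G) \<and>
     (\<forall>s \<in> st G. \<exists>a. enabled G s a) \<and>
     (\<comment> \<open>F consists of sink states\<close>
      \<forall>f \<in> fin G. \<forall>a. enabled G f a \<longrightarrow> succ G f a = f)"

primrec Z :: "('s, 'a) game \<Rightarrow> 's set \<Rightarrow> nat \<Rightarrow> 's set" where
  "Z G R 0 = R"
| "Z G R (Suc k) = Z G R k
     \<union> {s \<in> st1 G. \<forall>a. enabled G s a \<longrightarrow> succ G s a \<in> Z G R k}
     \<union> {s \<in> st2 G. \<exists>a. enabled G s a \<and> succ G s a \<in> Z G R k}"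

definition Win2 :: "('s, 'a) game \<Rightarrow> 's set \<Rightarrow> 's set" where
  "Win2 G R = (\<Union>k. Z G R k)"

definition rank :: "('s, 'a) game \<Rightarrow> 's set \<Rightarrow> 's \<Rightarrow> enat" where
  "rank G R s = (if \<exists>k. s \<in> Z G R k then enat (LEAST k. s \<in> Z G R k) else \<infinity>)"

text \<open>Subjectively rationalizable actions (P2's perceptual game has goal F \<union> Y).\<close>
definition SRActs :: "('s, 'a) game \<Rightarrow> 's set \<Rightarrow> 's set \<Rightarrow> 's \<Rightarrow> 'a set" where
  "SRActs G X Y q =
     (if q \<in> st2 G \<inter> Win2 G (fin G) - (fin G \<union> Y)
      then {a. enabled G q a \<and> rank G (fin G \<union> Y) (succ G q a) < rank G (fin G \<union> Y) q}
      else {a. enabled G q a})"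

definition SR_strategy1 :: "('s, 'a) game \<Rightarrow> 's set \<Rightarrow> 's set \<Rightarrow> ('s \<Rightarrow> 'a) \<Rightarrow> bool" where
  "SR_strategy1 G X Y \<pi> \<longleftrightarrow> (\<forall>q \<in> st1 G. \<pi> q \<in> SRActs G X Y q)"

definition SR_strategy2 :: "('s, 'a) game \<Rightarrow> 's set \<Rightarrow> 's set \<Rightarrow> ('s \<Rightarrow> 'a) \<Rightarrow> bool" where
  "SR_strategy2 G X Y \<pi> \<longleftrightarrow> (\<forall>q \<in> st2 G. \<pi> q \<in> SRActs G X Y q)"

definition true_succ :: "('s, 'a) game \<Rightarrow> 's set \<Rightarrow> 's set \<Rightarrow> 's \<Rightarrow> 'a \<Rightarrow> 's" where
  "true_succ G X Y q a = (if q \<in> X \<union> Y then q else succ G q a)"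

primrec play :: "('s, 'a) game \<Rightarrow> 's set \<Rightarrow> 's set \<Rightarrow> ('s \<Rightarrow> 'a) \<Rightarrow> ('s \<Rightarrow> 'a) \<Rightarrow> 's \<Rightarrow> nat \<Rightarrow> 's" where
  "play G X Y \<pi>1 \<pi>2 s 0 = s"
| "play G X Y \<pi>1 \<pi>2 s (Suc n) =
     (let q = play G X Y \<pi>1 \<pi>2 s n in
      true_succ G X Y q (if q \<in> st1 G then \<pi>1 q else \<pi>2 q))"

definition stealthy_deceptive_sure_winning ::
  "('s, 'a) game \<Rightarrow> 's set \<Rightarrow> 's set \<Rightarrow> ('s \<Rightarrow> 'a) \<Rightarrow> 's \<Rightarrow> bool" where
  "stealthy_deceptive_sure_winning G X Y \<pi>1 s \<longleftrightarrow>
     SR_strategy1 G X Y \<pi>1 \<and>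
     (\<forall>\<pi>2. SR_strategy2 G X Y \<pi>2 \<longrightarrow> (\<exists>n. play G X Y \<pi>1 \<pi>2 s n \<in> X \<union> Y))"

definition DSWin1 :: "('s, 'a) game \<Rightarrow> 's set \<Rightarrow> 's set \<Rightarrow> 's set" where
  "DSWin1 G X Y = {s \<in> st G. \<exists>\<pi>1. stealthy_deceptive_sure_winning G X Y \<pi>1 s}"

end

theory Submission
  imports Defs
begin

(* Without traps, P1 wins stealthily against fake targets Y exactly from the attractor of Y in
   the game where P2 may only use subjectively rationalizable actions: inside it P1 follows the
   attractor, and outside it every P2 state has a rationalizable action that stays outside.
   For Y1 \<subseteq> Y2 \<subseteq> Win2(F), an action that is rationalizable for Y2 and stays outside the
   attractor of Y2 is rationalizable for Y1 as well, since outside that attractor the ranks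
   towards F \<union> Y2 coincide with the ranks towards F, which dominate the ranks towards F \<union> Y1.
   So from outside the attractor of Y2, P2 can keep the play away from Y1 while remaining
   rationalizable for Y1.  Hence DSWin1(\<emptyset>, -) is monotone on subsets of Win2(F). *)

lemma finite_subset_UN_mono:
  fixes f :: "nat \<Rightarrow> 'a set"
  assumes "finite A" "A \<subseteq> (\<Union>k. f k)" "mono f"
  obtains k where "A \<subseteq> f k"
proof -
  have "subset.chain UNIV (range f)"
    using \<open>mono f\<close> nat_le_linear unfolding subset.chain_def mono_def by blast
  moreover have "range f \<noteq> {}" by simp
  ultimately show thesis
    using finite_subset_Union_chain[OF assms(1,2)] that by blast
qed

lemma wf_game_succ_in_st: "wf_game G \<Longrightarrow> enabled G q a \<Longrightarrow> succ G q a \<in> st G"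
  unfolding wf_game_def by blast

lemma wf_game_st1_iff: "wf_game G \<Longrightarrow> q \<in> st1 G \<longleftrightarrow> q \<in> st G \<and> q \<notin> st2 G"
  unfolding wf_game_def by blast

lemma wf_game_st2_iff: "wf_game G \<Longrightarrow> q \<in> st2 G \<longleftrightarrow> q \<in> st G \<and> q \<notin> st1 G"
  unfolding wf_game_def by blast

lemma wf_game_ex_enabled: "wf_game G \<Longrightarrow> q \<in> st G \<Longrightarrow> \<exists>a. enabled G q a"
  unfolding wf_game_def by blast

lemma finite_successors:
  assumes "wf_game G"
  shows "finite (succ G q ` {a. enabled G q a})"
proof (rule finite_subset)
  show "succ G q ` {a. enabled G q a} \<subseteq> st G"
    using wf_game_succ_in_st[OF assms] by blast
  show "finite (st G)"
    using assms unfolding wf_game_def by blast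
qed

lemma mono_Z: "mono (Z G R)"
  by (rule monoI, rule lift_Suc_mono_le) auto

lemma Z_mono_target: "R \<subseteq> R' \<Longrightarrow> Z G R k \<subseteq> Z G R' k"
  by (induction k) auto

lemma rank_le_enat_iff: "rank G R x \<le> enat k \<longleftrightarrow> x \<in> Z G R k"
proof
  assume le: "rank G R x \<le> enat k"
  then have ex: "\<exists>m. x \<in> Z G R m"
    unfolding rank_def by (auto split: if_splits)
  then have "x \<in> Z G R (LEAST m. x \<in> Z G R m)"
    by (rule LeastI_ex)
  moreover have "(LEAST m. x \<in> Z G R m) \<le> k"
    using le ex unfolding rank_def by simp
  ultimately show "x \<in> Z G R k"
    by (meson mono_Z monoD subsetD)
next
  assume "x \<in> Z G R k"
  then show "rank G R x \<le> enat k"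
    unfolding rank_def by (auto intro: Least_le)
qed

lemma rank_antimono:
  assumes "R \<subseteq> R'"
  shows "rank G R' x \<le> rank G R x"
proof (cases "rank G R x")
  case (enat m)
  then have "x \<in> Z G R' m"
    using rank_le_enat_iff Z_mono_target[OF assms] by (metis order_refl subsetD)
  then show ?thesis
    using enat rank_le_enat_iff by metis
qed simp

lemma Win2_closed_st1:
  assumes "wf_game G" "q \<in> st1 G" "\<And>a. enabled G q a \<Longrightarrow> succ G q a \<in> Win2 G R"
  shows "q \<in> Win2 G R"
proof -
  have "succ G q ` {a. enabled G q a} \<subseteq> (\<Union>k. Z G R k)"
    using assms(3) unfolding Win2_def by blast
  then obtain k where "succ G q ` {a. enabled G q a} \<subseteq> Z G R k"
    by (rule finite_subset_UN_mono[OF finite_successors[OF assms(1)] _ mono_Z])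
  then have "q \<in> Z G R (Suc k)"
    using assms(2) by auto
  then show ?thesis
    unfolding Win2_def by blast
qed

lemma Win2_closed_st2:
  assumes "q \<in> st2 G" "enabled G q a" "succ G q a \<in> Win2 G R"
  shows "q \<in> Win2 G R"
proof -
  obtain k where "succ G q a \<in> Z G R k"
    using assms(3) unfolding Win2_def by blast
  then have "q \<in> Z G R (Suc k)"
    using assms(1,2) by auto
  then show ?thesis
    unfolding Win2_def by blast
qed

lemma Win2_mono_target: "R \<subseteq> R' \<Longrightarrow> Win2 G R \<subseteq> Win2 G R'"
  unfolding Win2_def by (intro UN_mono Z_mono_target) simp_all

lemma target_subset_Win2: "R \<subseteq> Win2 G R"
  unfolding Win2_def by (metis UN_upper UNIV_I Z.simps(1))

lemma Win2_Un_absorb: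
  assumes "wf_game G" "Y \<subseteq> Win2 G R"
  shows "Win2 G (R \<union> Y) = Win2 G R"
proof -
  have "Z G (R \<union> Y) k \<subseteq> Win2 G R" for k
  proof (induction k)
    case 0
    show ?case
      using assms(2) target_subset_Win2 by simp
  next
    case (Suc k)
    show ?case
    proof
      fix x assume "x \<in> Z G (R \<union> Y) (Suc k)"
      then consider "x \<in> Z G (R \<union> Y) k"
        | "x \<in> st1 G" "\<forall>a. enabled G x a \<longrightarrow> succ G x a \<in> Z G (R \<union> Y) k"
        | a where "x \<in> st2 G" "enabled G x a" "succ G x a \<in> Z G (R \<union> Y) k"
        by auto
      then show "x \<in> Win2 G R"
      proof cases
        case 1
        then show ?thesis using Suc.IH by blast
      next
        case 2
        show ?thesis
          by (rule Win2_closed_st1[OF assms(1) 2(1)]) (use 2(2) Suc.IH in blast)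
      next
        case (3 a)
        show ?thesis
          by (rule Win2_closed_st2[OF 3(1,2)]) (use 3(3) Suc.IH in blast)
      qed
    qed
  qed
  then have "Win2 G (R \<union> Y) \<subseteq> Win2 G R"
    unfolding Win2_def by blast
  then show ?thesis
    using Win2_mono_target[of R "R \<union> Y" G] by blast
qed

lemma rank_decreasing_action:
  assumes "q \<in> st2 G" "q \<notin> st1 G" "q \<in> Win2 G R - R"
  obtains a where "enabled G q a" "rank G R (succ G q a) < rank G R q"
proof -
  have ex: "\<exists>k. q \<in> Z G R k"
    using assms(3) unfolding Win2_def by blast
  define m where "m = (LEAST k. q \<in> Z G R k)"
  have m: "rank G R q = enat m"
    using ex unfolding rank_def m_def by simp
  then have qm: "q \<in> Z G R m"
    using rank_le_enat_iff[of G R q m] by simp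
  have "m \<noteq> 0"
    using qm assms(3) by (intro notI) simp
  then obtain j where j: "m = Suc j"
    using not0_implies_Suc by blast
  have "q \<notin> Z G R j"
    using m j rank_le_enat_iff[of G R q j] by simp
  then obtain a where a: "enabled G q a" "succ G q a \<in> Z G R j"
    using qm assms(2) unfolding j by auto
  have "rank G R (succ G q a) \<le> enat j"
    by (simp add: rank_le_enat_iff a(2))
  also have "enat j < rank G R q"
    using m j by simp
  finally show thesis
    using that a(1) by blast
qed

lemma Z_of_rank_less:
  assumes "rank G R y < rank G R x" "x \<in> Z G R (Suc k)"
  shows "y \<in> Z G R k"
proof -
  have "eSuc (rank G R y) \<le> rank G R x"
    using assms(1) by (rule ileI1)
  also have "\<dots> \<le> eSuc (enat k)"
    using assms(2) rank_le_enat_iff[of G R x "Suc k"] by (simp add: eSuc_enat)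
  finally show ?thesis
    by (simp add: rank_le_enat_iff)
qed

lemma SRActs_enabled: "a \<in> SRActs G X Y q \<Longrightarrow> enabled G q a"
  unfolding SRActs_def by (auto split: if_splits)

lemma SR_strategy1_enabled: "SR_strategy1 G X Y \<pi> \<Longrightarrow> q \<in> st1 G \<Longrightarrow> enabled G q (\<pi> q)"
  unfolding SR_strategy1_def by (meson SRActs_enabled)

lemma SR_strategy2_enabled: "SR_strategy2 G X Y \<pi> \<Longrightarrow> q \<in> st2 G \<Longrightarrow> enabled G q (\<pi> q)"
  unfolding SR_strategy2_def by (meson SRActs_enabled)

lemma SRActs_nonempty:
  assumes "wf_game G" "q \<in> st G"
  obtains a where "a \<in> SRActs G X Y q"
proof (cases "q \<in> st2 G \<inter> Win2 G (fin G) - (fin G \<union> Y)")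
  case True
  then have "q \<in> st2 G" "q \<notin> st1 G"
    using wf_game_st2_iff[OF assms(1)] by blast+
  moreover have "q \<in> Win2 G (fin G \<union> Y) - (fin G \<union> Y)"
    using True Win2_mono_target[of "fin G" "fin G \<union> Y" G] by blast
  ultimately obtain a where "enabled G q a"
    "rank G (fin G \<union> Y) (succ G q a) < rank G (fin G \<union> Y) q"
    by (rule rank_decreasing_action)
  then have "a \<in> SRActs G X Y q"
    unfolding SRActs_def if_P[OF True] by simp
  then show thesis
    by (rule that)
next
  case False
  obtain a where "enabled G q a"
    using wf_game_ex_enabled[OF assms] by blast
  then have "a \<in> SRActs G X Y q"
    unfolding SRActs_def if_not_P[OF False] by simp
  then show thesis
    by (rule that)
qed

primrec Att :: "('s, 'a) game \<Rightarrow> 's set \<Rightarrow> nat \<Rightarrow> 's set" where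
  "Att G Y 0 = Y"
| "Att G Y (Suc k) = Att G Y k
     \<union> {q \<in> st1 G. \<exists>a. enabled G q a \<and> succ G q a \<in> Att G Y k}
     \<union> {q \<in> st2 G. \<forall>a \<in> SRActs G {} Y q. succ G q a \<in> Att G Y k}"

definition Attr :: "('s, 'a) game \<Rightarrow> 's set \<Rightarrow> 's set" where
  "Attr G Y = (\<Union>k. Att G Y k)"

lemma mono_Att: "mono (Att G Y)"
  by (rule monoI, rule lift_Suc_mono_le) auto

lemma target_subset_Attr: "Y \<subseteq> Attr G Y"
  unfolding Attr_def by (metis UN_upper UNIV_I Att.simps(1))

lemma Attr_closed_st1:
  assumes "q \<in> st1 G" "enabled G q a" "succ G q a \<in> Attr G Y"
  shows "q \<in> Attr G Y"
proof -
  obtain k where "succ G q a \<in> Att G Y k"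
    using assms(3) unfolding Attr_def by blast
  then have "q \<in> Att G Y (Suc k)"
    using assms(1,2) by auto
  then show ?thesis
    unfolding Attr_def by blast
qed

lemma Attr_closed_st2:
  assumes "wf_game G" "q \<in> st2 G" "\<And>a. a \<in> SRActs G {} Y q \<Longrightarrow> succ G q a \<in> Attr G Y"
  shows "q \<in> Attr G Y"
proof -
  have "succ G q ` SRActs G {} Y q \<subseteq> succ G q ` {a. enabled G q a}"
    using SRActs_enabled by (intro image_mono subsetI) simp
  then have "finite (succ G q ` SRActs G {} Y q)"
    using finite_successors[OF assms(1)] by (rule finite_subset)
  moreover have "succ G q ` SRActs G {} Y q \<subseteq> (\<Union>k. Att G Y k)"
    using assms(3) unfolding Attr_def by blast
  ultimately obtain k where "succ G q ` SRActs G {} Y q \<subseteq> Att G Y k"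
    using mono_Att by (rule finite_subset_UN_mono)
  then have "q \<in> Att G Y (Suc k)"
    using assms(2) by auto
  then show ?thesis
    unfolding Attr_def by blast
qed

lemma SRAct_avoiding_Attr:
  assumes "wf_game G" "q \<in> st2 G" "q \<notin> Attr G Y"
  obtains a where "a \<in> SRActs G {} Y q" "succ G q a \<notin> Attr G Y"
  using Attr_closed_st2[OF assms(1,2)] assms(3) by blast

lemma st2_outside_Attr_step:
  assumes wf: "wf_game G" and Y: "Y \<subseteq> Win2 G (fin G)"
    and x: "x \<in> st2 G" "x \<notin> fin G" "x \<notin> Attr G Y" "x \<in> Z G (fin G \<union> Y) (Suc k)"
  obtains b where "enabled G x b" "succ G x b \<notin> Attr G Y" "succ G x b \<in> Z G (fin G \<union> Y) k"
proof -
  have "x \<in> Win2 G (fin G)"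
    using x(4) Win2_Un_absorb[OF wf Y] unfolding Win2_def by blast
  moreover have "x \<notin> Y"
    using x(3) target_subset_Attr[of Y G] by blast
  ultimately have x_SR: "x \<in> st2 G \<inter> Win2 G (fin G) - (fin G \<union> Y)"
    using x(1,2) by blast
  obtain b where b: "b \<in> SRActs G {} Y x" "succ G x b \<notin> Attr G Y"
    using SRAct_avoiding_Attr[OF wf x(1,3)] by blast
  then have "enabled G x b" "rank G (fin G \<union> Y) (succ G x b) < rank G (fin G \<union> Y) x"
    using x_SR unfolding SRActs_def by auto
  moreover have "succ G x b \<in> Z G (fin G \<union> Y) k"
    using Z_of_rank_less calculation(2) x(4) .
  ultimately show thesis
    using that b(2) by blast
qed

lemma Z_fin_outside_Attr:
  assumes wf: "wf_game G" and Y: "Y \<subseteq> Win2 G (fin G)"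
  shows "x \<notin> Attr G Y \<Longrightarrow> x \<in> Z G (fin G \<union> Y) k \<Longrightarrow> x \<in> Z G (fin G) k"
proof (induction k arbitrary: x)
  case 0
  then show ?case
    using target_subset_Attr[of Y G] by auto
next
  case (Suc k)
  from Suc.prems(2) consider (prev) "x \<in> Z G (fin G \<union> Y) k"
    | (p1) "x \<in> st1 G" "\<forall>a. enabled G x a \<longrightarrow> succ G x a \<in> Z G (fin G \<union> Y) k"
    | (p2) "x \<in> st2 G"
    by auto
  then show ?case
  proof cases
    case prev
    then show ?thesis
      using Suc.IH Suc.prems(1) by simp
  next
    case p1
    have "succ G x a \<in> Z G (fin G) k" if "enabled G x a" for a
    proof -
      have "succ G x a \<notin> Attr G Y"
        using Attr_closed_st1[OF p1(1) that] Suc.prems(1) by blast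
      then show ?thesis
        using Suc.IH p1(2) that by blast
    qed
    then show ?thesis
      using p1(1) by simp
  next
    case p2
    show ?thesis
    proof (cases "x \<in> fin G")
      case True
      then show ?thesis
        using monoD[OF mono_Z, of 0 "Suc k" G "fin G"] by auto
    next
      case False
      obtain b where "enabled G x b" "succ G x b \<notin> Attr G Y" "succ G x b \<in> Z G (fin G \<union> Y) k"
        using st2_outside_Attr_step[OF wf Y p2 False Suc.prems] .
      then show ?thesis
        using p2 Suc.IH by auto
    qed
  qed
qed

lemma rank_fin_le_outside_Attr:
  assumes "wf_game G" "Y \<subseteq> Win2 G (fin G)" "x \<notin> Attr G Y"
  shows "rank G (fin G) x \<le> rank G (fin G \<union> Y) x"
proof (cases "rank G (fin G \<union> Y) x")
  case (enat m)
  then have "x \<in> Z G (fin G \<union> Y) m"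
    using rank_le_enat_iff[of G "fin G \<union> Y" x m] by simp
  then have "x \<in> Z G (fin G) m"
    using Z_fin_outside_Attr[OF assms] by blast
  then show ?thesis
    using enat rank_le_enat_iff by metis
qed simp

lemma SRActs_outside_Attr_antimono:
  assumes wf: "wf_game G" and "Y1 \<subseteq> Y2" "Y2 \<subseteq> Win2 G (fin G)"
    and "q \<notin> Attr G Y2" "succ G q a \<notin> Attr G Y2" "a \<in> SRActs G X Y2 q"
  shows "a \<in> SRActs G X Y1 q"
proof (cases "q \<in> st2 G \<inter> Win2 G (fin G) - (fin G \<union> Y2)")
  case True
  then have en: "enabled G q a"
    and dec: "rank G (fin G \<union> Y2) (succ G q a) < rank G (fin G \<union> Y2) q"
    using assms(6) unfolding SRActs_def by auto
  have "rank G (fin G \<union> Y1) (succ G q a) \<le> rank G (fin G) (succ G q a)"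
    by (rule rank_antimono) simp
  also have "\<dots> \<le> rank G (fin G \<union> Y2) (succ G q a)"
    using rank_fin_le_outside_Attr[OF wf assms(3,5)] .
  also have "\<dots> < rank G (fin G \<union> Y2) q"
    by (rule dec)
  also have "\<dots> \<le> rank G (fin G \<union> Y1) q"
    using assms(2) by (intro rank_antimono) blast
  finally show ?thesis
    using True en assms(2) unfolding SRActs_def by auto
next
  case False
  then have "q \<notin> st2 G \<inter> Win2 G (fin G) - (fin G \<union> Y1)"
    using assms(4) target_subset_Attr[of Y2 G] by blast
  then show ?thesis
    using False assms(6) unfolding SRActs_def by auto
qed

lemma play_Suc_outside_targets:
  assumes "s \<notin> X \<union> Y"
  shows "play G X Y \<pi>1 \<pi>2 s (Suc n) =
    play G X Y \<pi>1 \<pi>2 (succ G s (if s \<in> st1 G then \<pi>1 s else \<pi>2 s)) n"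
  using assms by (induction n) (simp_all add: Let_def true_succ_def)

lemma play_invariant:
  assumes "s \<in> W" "W \<inter> (X \<union> Y) = {}"
    and "\<And>q. q \<in> W \<Longrightarrow> succ G q (if q \<in> st1 G then \<pi>1 q else \<pi>2 q) \<in> W"
  shows "play G X Y \<pi>1 \<pi>2 s n \<in> W"
  using assms by (induction n) (auto simp: Let_def true_succ_def)

lemma attractor_strategy:
  assumes "wf_game G"
  obtains \<sigma> where "\<And>q. q \<in> st G \<Longrightarrow> enabled G q (\<sigma> q)"
    and "\<And>q a k. enabled G q a \<Longrightarrow> succ G q a \<in> Att G Y k \<Longrightarrow> succ G q (\<sigma> q) \<in> Att G Y k"
proof -
  have "\<exists>a. (q \<in> st G \<longrightarrow> enabled G q a) \<and>
      (\<forall>b k. enabled G q b \<and> succ G q b \<in> Att G Y k \<longrightarrow> succ G q a \<in> Att G Y k)" for q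
  proof (cases "\<exists>k b. enabled G q b \<and> succ G q b \<in> Att G Y k")
    case True
    define k0 where "k0 = (LEAST k. \<exists>b. enabled G q b \<and> succ G q b \<in> Att G Y k)"
    have "\<exists>b. enabled G q b \<and> succ G q b \<in> Att G Y k0"
      unfolding k0_def using True by (rule LeastI_ex)
    then obtain b0 where b0: "enabled G q b0" "succ G q b0 \<in> Att G Y k0"
      by blast
    have "succ G q b0 \<in> Att G Y k" if "enabled G q b" "succ G q b \<in> Att G Y k" for b k
    proof -
      have "k0 \<le> k"
        unfolding k0_def by (rule Least_le) (use that in blast)
      then show ?thesis
        using b0(2) monoD[OF mono_Att, of k0 k G Y] by blast
    qed
    then show ?thesis
      using b0(1) by blast
  next
    case False
    obtain a where "q \<in> st G \<longrightarrow> enabled G q a"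
      using wf_game_ex_enabled[OF assms] by blast
    then show ?thesis
      using False by blast
  qed
  then obtain \<sigma> where "\<forall>q. (q \<in> st G \<longrightarrow> enabled G q (\<sigma> q)) \<and>
      (\<forall>b k. enabled G q b \<and> succ G q b \<in> Att G Y k \<longrightarrow> succ G q (\<sigma> q) \<in> Att G Y k)"
    by metis
  then show thesis
    using that by blast
qed

lemma attractor_play_reaches_target:
  assumes wf: "wf_game G"
    and \<sigma>: "\<And>q a k. enabled G q a \<Longrightarrow> succ G q a \<in> Att G Y k \<Longrightarrow> succ G q (\<sigma> q) \<in> Att G Y k"
    and \<pi>2: "SR_strategy2 G {} Y \<pi>2"
  shows "q \<in> Att G Y k \<Longrightarrow> \<exists>n. play G {} Y \<sigma> \<pi>2 q n \<in> Y"
proof (induction k arbitrary: q)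
  case 0
  then show ?case
    by (metis Att.simps(1) play.simps(1))
next
  case (Suc k)
  show ?case
  proof (cases "q \<in> Y")
    case True
    then show ?thesis
      by (metis play.simps(1))
  next
    case False
    let ?q' = "succ G q (if q \<in> st1 G then \<sigma> q else \<pi>2 q)"
    have step: "play G {} Y \<sigma> \<pi>2 q (Suc n) = play G {} Y \<sigma> \<pi>2 ?q' n" for n
      using False by (intro play_Suc_outside_targets) simp
    from Suc.prems consider (prev) "q \<in> Att G Y k"
      | (p1) a where "q \<in> st1 G" "enabled G q a" "succ G q a \<in> Att G Y k"
      | (p2) "q \<in> st2 G" "\<forall>a \<in> SRActs G {} Y q. succ G q a \<in> Att G Y k"
      by auto
    then show ?thesis
    proof cases
      case prev
      then show ?thesis
        by (rule Suc.IH)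
    next
      case p1
      then have "?q' \<in> Att G Y k"
        using \<sigma> by simp
      then show ?thesis
        using Suc.IH step by metis
    next
      case p2
      then have "q \<notin> st1 G" "\<pi>2 q \<in> SRActs G {} Y q"
        using wf_game_st2_iff[OF wf] \<pi>2 unfolding SR_strategy2_def by blast+
      then have "?q' \<in> Att G Y k"
        using p2(2) by simp
      then show ?thesis
        using Suc.IH step by metis
    qed
  qed
qed

lemma Attr_subset_DSWin1:
  assumes wf: "wf_game G"
  shows "st G \<inter> Attr G Y \<subseteq> DSWin1 G {} Y"
proof
  fix z assume z: "z \<in> st G \<inter> Attr G Y"
  obtain \<sigma> where en: "\<And>q. q \<in> st G \<Longrightarrow> enabled G q (\<sigma> q)"
    and att: "\<And>q a k. enabled G q a \<Longrightarrow> succ G q a \<in> Att G Y k \<Longrightarrow> succ G q (\<sigma> q) \<in> Att G Y k"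
    using attractor_strategy[OF wf] by blast
  have "\<sigma> q \<in> SRActs G {} Y q" if "q \<in> st1 G" for q
  proof -
    have "q \<in> st G" "q \<notin> st2 G"
      using that wf_game_st1_iff[OF wf] by blast+
    then show ?thesis
      using en unfolding SRActs_def by simp
  qed
  then have "SR_strategy1 G {} Y \<sigma>"
    unfolding SR_strategy1_def by blast
  moreover obtain k where "z \<in> Att G Y k"
    using z unfolding Attr_def by blast
  then have "\<exists>n. play G {} Y \<sigma> \<pi>2 z n \<in> {} \<union> Y" if "SR_strategy2 G {} Y \<pi>2" for \<pi>2
    using attractor_play_reaches_target[OF wf att that] by simp
  ultimately show "z \<in> DSWin1 G {} Y"
    using z unfolding DSWin1_def stealthy_deceptive_sure_winning_def by blast
qed

lemma spoiling_strategy: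
  assumes wf: "wf_game G" and "Y1 \<subseteq> Y2" "Y2 \<subseteq> Win2 G (fin G)"
  obtains \<pi>2 where "SR_strategy2 G {} Y1 \<pi>2"
    and "\<And>q. q \<in> st2 G \<Longrightarrow> q \<notin> Attr G Y2 \<Longrightarrow> succ G q (\<pi>2 q) \<notin> Attr G Y2"
proof -
  have "\<exists>a. (q \<in> st2 G \<longrightarrow> a \<in> SRActs G {} Y1 q) \<and>
      (q \<in> st2 G \<and> q \<notin> Attr G Y2 \<longrightarrow> succ G q a \<notin> Attr G Y2)" for q
  proof (cases "q \<in> st2 G")
    case True
    show ?thesis
    proof (cases "q \<in> Attr G Y2")
      case True
      have "q \<in> st G"
        using \<open>q \<in> st2 G\<close> wf_game_st2_iff[OF wf] by blast
      then obtain a where "a \<in> SRActs G {} Y1 q"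
        by (rule SRActs_nonempty[OF wf])
      then show ?thesis
        using True by blast
    next
      case False
      obtain a where "a \<in> SRActs G {} Y2 q" "succ G q a \<notin> Attr G Y2"
        using SRAct_avoiding_Attr[OF wf \<open>q \<in> st2 G\<close> False] by blast
      then have "a \<in> SRActs G {} Y1 q"
        using SRActs_outside_Attr_antimono[OF wf assms(2,3) False] by blast
      then show ?thesis
        using \<open>succ G q a \<notin> Attr G Y2\<close> by blast
    qed
  qed simp
  then obtain \<pi>2 where "\<forall>q. (q \<in> st2 G \<longrightarrow> \<pi>2 q \<in> SRActs G {} Y1 q) \<and>
      (q \<in> st2 G \<and> q \<notin> Attr G Y2 \<longrightarrow> succ G q (\<pi>2 q) \<notin> Attr G Y2)"
    by metis
  then show thesis
    using that unfolding SR_strategy2_def by blast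
qed

lemma play_avoids_Attr:
  assumes wf: "wf_game G" and "Y1 \<subseteq> Attr G Y2"
    and \<pi>1: "\<And>q. q \<in> st1 G \<Longrightarrow> enabled G q (\<pi>1 q)"
    and \<pi>2: "\<And>q. q \<in> st2 G \<Longrightarrow> enabled G q (\<pi>2 q)"
    and spoils: "\<And>q. q \<in> st2 G \<Longrightarrow> q \<notin> Attr G Y2 \<Longrightarrow> succ G q (\<pi>2 q) \<notin> Attr G Y2"
    and z: "z \<in> st G - Attr G Y2"
  shows "play G {} Y1 \<pi>1 \<pi>2 z n \<in> st G - Attr G Y2"
proof (rule play_invariant)
  show "z \<in> st G - Attr G Y2"
    by (rule z)
  show "(st G - Attr G Y2) \<inter> ({} \<union> Y1) = {}"
    using assms(2) by blast
next
  fix q assume q: "q \<in> st G - Attr G Y2"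
  let ?a = "if q \<in> st1 G then \<pi>1 q else \<pi>2 q"
  have "enabled G q ?a \<and> succ G q ?a \<notin> Attr G Y2"
  proof (cases "q \<in> st1 G")
    case True
    then show ?thesis
      using q \<pi>1 Attr_closed_st1[OF True] by auto
  next
    case False
    then have "q \<in> st2 G"
      using q wf_game_st2_iff[OF wf] by blast
    then show ?thesis
      using False q \<pi>2 spoils by simp
  qed
  then show "succ G q ?a \<in> st G - Attr G Y2"
    using wf_game_succ_in_st[OF wf] by blast
qed

lemma DSWin1_subset_Attr:
  assumes wf: "wf_game G" and Y: "Y1 \<subseteq> Y2" "Y2 \<subseteq> Win2 G (fin G)"
  shows "DSWin1 G {} Y1 \<subseteq> Attr G Y2"
proof
  fix z assume "z \<in> DSWin1 G {} Y1"
  then obtain \<pi>1 where z: "z \<in> st G" and \<pi>1: "SR_strategy1 G {} Y1 \<pi>1"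
    and wins: "\<And>\<pi>2. SR_strategy2 G {} Y1 \<pi>2 \<Longrightarrow> \<exists>n. play G {} Y1 \<pi>1 \<pi>2 z n \<in> {} \<union> Y1"
    unfolding DSWin1_def stealthy_deceptive_sure_winning_def by blast
  have Y1_Attr: "Y1 \<subseteq> Attr G Y2"
    using Y(1) target_subset_Attr[of Y2 G] by blast
  show "z \<in> Attr G Y2"
  proof (rule ccontr)
    assume "z \<notin> Attr G Y2"
    obtain \<pi>2 where \<pi>2: "SR_strategy2 G {} Y1 \<pi>2"
      and spoils: "\<And>q. q \<in> st2 G \<Longrightarrow> q \<notin> Attr G Y2 \<Longrightarrow> succ G q (\<pi>2 q) \<notin> Attr G Y2"
      using spoiling_strategy[OF wf Y] by blast
    obtain n where "play G {} Y1 \<pi>1 \<pi>2 z n \<in> Y1"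
      using wins[OF \<pi>2] by auto
    moreover have "play G {} Y1 \<pi>1 \<pi>2 z n \<in> st G - Attr G Y2"
      using play_avoids_Attr[OF wf Y1_Attr SR_strategy1_enabled[OF \<pi>1]
          SR_strategy2_enabled[OF \<pi>2] spoils] z \<open>z \<notin> Attr G Y2\<close> by blast
    ultimately show False
      using Y1_Attr by blast
  qed
qed

lemma DSWin1_mono:
  assumes "wf_game G" "Y1 \<subseteq> Y2" "Y2 \<subseteq> Win2 G (fin G)"
  shows "DSWin1 G {} Y1 \<subseteq> DSWin1 G {} Y2"
proof -
  have "DSWin1 G {} Y1 \<subseteq> st G \<inter> Attr G Y2"
    using DSWin1_subset_Attr[OF assms] unfolding DSWin1_def by blast
  also have "\<dots> \<subseteq> DSWin1 G {} Y2"
    using Attr_subset_DSWin1[OF assms(1)] .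
  finally show ?thesis .
qed

theorem corollary2:
  fixes G :: "('s, 'a) game" and Y :: "'s set" and s :: 's
  assumes "wf_game G"
    and "Y \<subseteq> Win2 G (fin G) - fin G"
    and "s \<in> Win2 G (fin G) - fin G"
  shows "DSWin1 G {} Y \<union> DSWin1 G {} {s} \<subseteq> DSWin1 G {} (Y \<union> {s})"
proof -
  have "Y \<union> {s} \<subseteq> Win2 G (fin G)"
    using assms(2,3) by blast
  then show ?thesis
    using DSWin1_mono[OF assms(1), of Y "Y \<union> {s}"] DSWin1_mono[OF assms(1), of "{s}" "Y \<union> {s}"]
    by blast
qed

end
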